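(* Let $\mathcal M(n)$ denote the maximum number of edges of an edge-magic graph with $n$ vertices. Then $$\frac27\, n^2+O(n)\le \mathcal M(n)\le \left(0.489\ldots+o(1)\right) n^2 \qquad (n\to\infty),$$ where $0.489\ldots$ denotes the constant $\frac12-\frac{2}{(2+(1+2\sqrt2)\pi)^2}\approx 0.4898$.
   Context: For a positive integer $k$, $[k]=\{1,\dots,k\}$. Let $G$ be a finite simple graph with $n$ vertices and $m$ edges (with $V(G)\cap E(G)=\emptyset$). An edge-magic labelling of $G$ with magic sum $s$ is a bijection $l:V(G)\cup E(G)\to[m+n]$ such that $l(a)+l(b)+l(ab)=s$ for every edge $ab$ of $G$. The graph $G$ is edge-magic if it admits an edge-magic labelling for some $s$. *)

theory Defs
  imports Complex_Main
begin

text \<open>A finite simple graph is a finite vertex set V with a set E of 2-element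
subsets of V. Vertices and edges are kept disjoint by tagging them with Inl / Inr.\<close>

definition simple_graph :: "'a set \<Rightarrow> 'a set set \<Rightarrow> bool" where
  "simple_graph V E \<longleftrightarrow> finite V \<and> E \<subseteq> {{a, b} | a b. a \<in> V \<and> b \<in> V \<and> a \<noteq> b}"

definition edge_magic_labelling ::
    "'a set \<Rightarrow> 'a set set \<Rightarrow> ('a + 'a set \<Rightarrow> nat) \<Rightarrow> nat \<Rightarrow> bool" where
  "edge_magic_labelling V E l s \<longleftrightarrow>
     bij_betw l (Inl ` V \<union> Inr ` E) {1 .. card E + card V} \<and>
     (\<forall>a b. {a, b} \<in> E \<longrightarrow> l (Inl a) + l (Inl b) + l (Inr {a, b}) = s)"

definition edge_magic :: "'a set \<Rightarrow> 'a set set \<Rightarrow> bool" where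
  "edge_magic V E \<longleftrightarrow> simple_graph V E \<and> (\<exists>l s. edge_magic_labelling V E l s)"

text \<open>Maximum number of edges of an edge-magic graph on n vertices
(vertex set taken to be {0..<n}; every n-vertex graph is isomorphic to one of these).\<close>

definition max_edge_magic :: "nat \<Rightarrow> nat" where
  "max_edge_magic n = Max {card E | E. edge_magic {..<n} E}"

end

theory Submission
  imports Defs "HOL-Analysis.Complex_Transcendental"
begin

(* Upper bound: for an edge-magic labelling with vertex labels f, edge labels g and magic sum s,
   put F(t) = sum_v exp(i f(v) t) and H(t) = sum_e exp(i g(e) t).  Since f(u) + f(v) = s - g(uv)
   on every edge, F(t)^2 agrees with 2 exp(i s t) conj(H(t)) up to the n^2 - 2m ordered pairs of
   non-adjacent vertices, while F + H is the geometric sum over all labels 1..N, N = m + n.  At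
   t = 2 pi/N that geometric sum vanishes, so |H| = |F|; at t = pi/N it has modulus at least
   2N/pi, so |H| is large; and 2|F(t)|^2 - n^2 <= n |F(2t)| links the two points.  The resulting
   three inequalities force m <= 0.4895 n^2 once n >= 100.

   Lower bound: three blocks of about 7P vertex labels whose pairwise cross sums fill an interval
   of about 14P^2 consecutive integers.  Every label b outside the blocks is then s - x - y for a
   pair x, y of vertex labels, which becomes an edge labelled b; this gives about 2n^2/7 edges. *)

definition arcs :: "'a set set \<Rightarrow> ('a \<times> 'a) set" where
  "arcs E = {(a, b). {a, b} \<in> E}"

lemma simple_graph_edgeE:
  assumes "simple_graph V E" "e \<in> E"
  obtains a b where "e = {a, b}" "a \<in> V" "b \<in> V" "a \<noteq> b"
  using assms unfolding simple_graph_def by blast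

lemma simple_graph_finite_edges: "simple_graph V E \<Longrightarrow> finite E"
  unfolding simple_graph_def by (auto intro: finite_subset[of E "Pow V"])

lemma arcs_subset: "simple_graph V E \<Longrightarrow> arcs E \<subseteq> V \<times> V"
  unfolding arcs_def by (auto elim!: simple_graph_edgeE simp: doubleton_eq_iff)

lemma sum_arcs:
  fixes h :: "'a set \<Rightarrow> 'b::comm_semiring_1"
  assumes "simple_graph V E"
  shows "(\<Sum>(a, b)\<in>arcs E. h {a, b}) = 2 * (\<Sum>e\<in>E. h e)"
proof -
  define ends :: "'a \<times> 'a \<Rightarrow> 'a set" where "ends = (\<lambda>(a, b). {a, b})"
  have "finite (arcs E)"
    using assms arcs_subset by (metis finite_SigmaI finite_subset simple_graph_def)
  moreover have "finite E"
    using assms by (rule simple_graph_finite_edges)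
  moreover have "ends ` arcs E \<subseteq> E"
    by (auto simp: arcs_def ends_def)
  ultimately have "(\<Sum>p\<in>arcs E. h (ends p)) = (\<Sum>e\<in>E. \<Sum>p\<in>{p \<in> arcs E. ends p = e}. h (ends p))"
    by (rule sum.group[symmetric])
  also have "\<dots> = (\<Sum>e\<in>E. 2 * h e)"
  proof (rule sum.cong[OF refl])
    fix e assume "e \<in> E"
    then obtain a b where "e = {a, b}" "a \<noteq> b"
      using assms by (auto elim: simple_graph_edgeE)
    moreover from this \<open>e \<in> E\<close> have "{p \<in> arcs E. ends p = e} = {(a, b), (b, a)}"
      by (auto simp: arcs_def ends_def doubleton_eq_iff insert_commute)
    ultimately show "(\<Sum>p\<in>{p \<in> arcs E. ends p = e}. h (ends p)) = 2 * h e"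
      by (simp add: ends_def insert_commute mult_2)
  qed
  finally show ?thesis
    by (simp add: ends_def case_prod_unfold sum_distrib_left)
qed

lemma card_arcs: "simple_graph V E \<Longrightarrow> card (arcs E) = 2 * card E"
  using sum_arcs[of V E "\<lambda>_. 1 :: nat"] by simp

section \<open>Exponential sums\<close>

lemma norm_cis_minus_one_le: "cmod (cis a - 1) \<le> \<bar>a\<bar>"
proof -
  have "(cmod (cis a - 1))\<^sup>2 = (cos a - 1)\<^sup>2 + (sin a)\<^sup>2"
    by (simp add: cmod_power2)
  also have "\<dots> = 2 - 2 * cos a"
    by (simp add: power2_eq_square algebra_simps)
  also have "\<dots> = 4 * (sin (a/2))\<^sup>2"
    using cos_double_sin[of "a/2"] by simp
  also have "\<dots> \<le> 4 * (a/2)\<^sup>2"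
    using abs_sin_x_le_abs_x[of "a/2"] by (simp only: abs_le_square_iff)
  also have "\<dots> = a\<^sup>2"
    by (simp add: power_divide)
  finally show ?thesis
    by (metis abs_le_square_iff abs_norm_cancel)
qed

lemma sum_cis_power_full_turn:
  assumes "N \<ge> 2"
  shows "(\<Sum>k=1..N. cis (2*pi/N) ^ k) = 0"
proof -
  let ?z = "cis (2*pi/N)"
  have "?z ^ N = cis (N * (2*pi/N))"
    by (rule Complex.DeMoivre)
  then have "?z ^ N = 1"
    using assms by simp
  moreover have "?z \<noteq> 1"
  proof
    assume "?z = 1"
    then have "cos (2*pi/N) = 1" by (simp add: complex_eq_iff)
    then obtain k :: int where k: "2*pi/N = real_of_int k * 2 * pi"
      using cos_one_2pi_int[THEN iffD1] by blast
    have "0 < 2*pi/N" "2*pi/N < 2*pi"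
      using assms by (simp_all add: field_simps)
    then have "0 < k" "k < 1"
      unfolding k by (simp_all add: zero_less_mult_iff)
    then show False by simp
  qed
  ultimately show ?thesis
    by (simp add: sum_gp)
qed

lemma norm_sum_cis_power_half_turn:
  assumes "N \<ge> 1"
  shows "2 * N / pi \<le> cmod (\<Sum>k=1..N. cis (pi/N) ^ k)"
proof -
  let ?z = "cis (pi/N)"
  have "?z ^ N = cis (N * (pi/N))"
    by (rule Complex.DeMoivre)
  then have "?z ^ N = -1"
    using assms by simp
  then have "?z \<noteq> 1" "?z ^ Suc N = - ?z" by auto
  then have "(\<Sum>k=1..N. ?z ^ k) = 2 * ?z / (1 - ?z)"
    using assms by (simp add: sum_gp)
  then have "cmod (\<Sum>k=1..N. ?z ^ k) = 2 / cmod (?z - 1)"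
    by (simp add: norm_divide norm_minus_commute)
  also have "\<dots> \<ge> 2 / (pi / N)"
    using \<open>?z \<noteq> 1\<close> norm_cis_minus_one_le[of "pi/N"] assms
    by (intro divide_left_mono mult_pos_pos) auto
  finally show ?thesis by simp
qed

lemma norm_sum_cis_double_angle:
  fixes x :: "'a \<Rightarrow> real"
  shows "2 * (cmod (\<Sum>v\<in>V. cis (x v)))\<^sup>2 - (real (card V))\<^sup>2 \<le> card V * cmod (\<Sum>v\<in>V. cis (2 * x v))"
proof -
  (* rotate the sum onto the positive real axis, then Cauchy-Schwarz on the cosines *)
  define S where "S = (\<Sum>v\<in>V. cis (x v))"
  define \<psi> where "\<psi> = Arg S"
  define c where "c v = cos (x v - \<psi>)" for v
  have S_polar: "S = cmod S * cis \<psi>"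
    using rcis_cmod_Arg[of S] by (simp add: rcis_def \<psi>_def)
  have "(\<Sum>v\<in>V. cis (x v - \<psi>)) = cis (- \<psi>) * S"
    by (simp add: S_def sum_distrib_left cis_mult algebra_simps)
  also have "\<dots> = cis (- \<psi>) * (cmod S * cis \<psi>)"
    using S_polar by (rule arg_cong)
  also have "\<dots> = cmod S"
    by (simp add: mult.left_commute[of "cis (- \<psi>)"] cis_mult)
  finally have "Re (\<Sum>v\<in>V. cis (x v - \<psi>)) = cmod S"
    by simp
  then have sum_c: "(\<Sum>v\<in>V. c v) = cmod S"
    by (simp add: c_def Re_sum)
  have "2 * (\<Sum>v\<in>V. (c v)\<^sup>2) - card V = (\<Sum>v\<in>V. 2 * (c v)\<^sup>2 - 1)"
    by (simp add: sum_subtractf sum_distrib_left)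
  also have "\<dots> = (\<Sum>v\<in>V. cos (2 * (x v - \<psi>)))"
    by (simp only: c_def cos_double_cos)
  also have "\<dots> = Re (cis (- 2 * \<psi>) * (\<Sum>v\<in>V. cis (2 * x v)))"
    by (simp add: sum_distrib_left cis_mult Re_sum algebra_simps)
  also have "\<dots> \<le> cmod (\<Sum>v\<in>V. cis (2 * x v))"
    using complex_Re_le_cmod[of "cis (- 2 * \<psi>) * (\<Sum>v\<in>V. cis (2 * x v))"]
    by (simp add: norm_mult)
  finally have sq: "2 * (\<Sum>v\<in>V. (c v)\<^sup>2) \<le> cmod (\<Sum>v\<in>V. cis (2 * x v)) + card V"
    by simp
  have "2 * (cmod S)\<^sup>2 \<le> 2 * (\<Sum>v\<in>V. (c v)\<^sup>2) * card V"
    using sum_squared_le_sum_of_squares[of c V] sum_c by simp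
  also have "\<dots> \<le> (cmod (\<Sum>v\<in>V. cis (2 * x v)) + card V) * card V"
    using sq by (intro mult_right_mono) auto
  finally show ?thesis
    unfolding S_def by (simp add: algebra_simps power2_eq_square)
qed

section \<open>The upper bound\<close>

lemma fourier_inequalities_bound:
  fixes a b h n m :: real
  assumes "0 \<le> b" "0 \<le> m" "100 \<le> n"
    and full_turn: "b\<^sup>2 \<le> 2 * b + (n\<^sup>2 - 2 * m)"
    and half_turn: "2 * (m + n) / pi - n \<le> h"
    and balance: "2 * h - a\<^sup>2 \<le> n\<^sup>2 - 2 * m"
    and double_angle: "2 * a\<^sup>2 - n\<^sup>2 \<le> n * b"
  shows "m \<le> 4895/10000 * n\<^sup>2"
proof (rule ccontr)
  assume "\<not> m \<le> 4895/10000 * n\<^sup>2"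
  then have m_big: "4895/10000 * n\<^sup>2 < m" by simp
  have "12732/20000 \<le> 2 / pi"
    using pi_approx(2) by (simp add: field_simps)
  then have "12732/20000 * m \<le> 2 * m / pi"
    using mult_right_mono[OF _ \<open>0 \<le> m\<close>] by fastforce
  also have "\<dots> \<le> 2 * (m + n) / pi"
    using \<open>100 \<le> n\<close> by (intro divide_right_mono) auto
  finally have "32732/10000 * m - n\<^sup>2 - 2 * n \<le> a\<^sup>2"
    using half_turn balance by linarith
  then have "20446/100000 * n\<^sup>2 - 4 * n < n * b"
    using double_angle m_big zero_le_power2[of n] by linarith
  then have "n * (20446/100000 * n - 4) < n * b"
    by (simp add: algebra_simps power2_eq_square)
  then have b_big: "20446/100000 * n - 5 < b - 1"
    using \<open>100 \<le> n\<close> by (simp add: mult_less_cancel_left_pos)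
  have "(20446/100000 * n - 5)\<^sup>2 < (b - 1)\<^sup>2"
    using b_big \<open>100 \<le> n\<close> by (intro power_strict_mono) auto
  then have "418038916/10000000000 * n\<^sup>2 - 20446/10000 * n + 25 < b\<^sup>2 - 2 * b + 1"
    by (simp add: power2_eq_square algebra_simps)
  moreover have "100 * n \<le> n\<^sup>2"
    using \<open>100 \<le> n\<close> by (simp add: power2_eq_square)
  ultimately show False
    using full_turn m_big \<open>100 \<le> n\<close> by linarith
qed

locale edge_magic_labelled =
  fixes V :: "'a set" and E :: "'a set set" and l :: "'a + 'a set \<Rightarrow> nat" and s :: nat
  assumes simple: "simple_graph V E"
    and labelling: "edge_magic_labelling V E l s"
begin

definition vertex_sum :: "real \<Rightarrow> complex" where
  "vertex_sum \<theta> = (\<Sum>v\<in>V. cis (real (l (Inl v)) * \<theta>))"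

definition edge_sum :: "real \<Rightarrow> complex" where
  "edge_sum \<theta> = (\<Sum>e\<in>E. cis (real (l (Inr e)) * \<theta>))"

lemma finite_vertices: "finite V"
  using simple by (simp add: simple_graph_def)

lemma finite_edges: "finite E"
  using simple by (rule simple_graph_finite_edges)

lemma norm_vertex_sum_le: "cmod (vertex_sum \<theta>) \<le> card V"
  unfolding vertex_sum_def using sum_norm_bound[of V "\<lambda>v. cis (real (l (Inl v)) * \<theta>)" 1] by simp

lemma vertex_sum_add_edge_sum: "vertex_sum \<theta> + edge_sum \<theta> = (\<Sum>k=1..card E + card V. cis \<theta> ^ k)"
proof -
  have "bij_betw l (Inl ` V \<union> Inr ` E) {1..card E + card V}"
    using labelling unfolding edge_magic_labelling_def by blast
  then have "(\<Sum>k=1..card E + card V. cis \<theta> ^ k) = (\<Sum>x\<in>Inl ` V \<union> Inr ` E. cis \<theta> ^ l x)"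
    by (rule sum.reindex_bij_betw[symmetric])
  also have "\<dots> = (\<Sum>x\<in>Inl ` V. cis \<theta> ^ l x) + (\<Sum>x\<in>Inr ` E. cis \<theta> ^ l x)"
    using finite_vertices finite_edges by (intro sum.union_disjoint) auto
  also have "\<dots> = vertex_sum \<theta> + edge_sum \<theta>"
    by (simp add: vertex_sum_def edge_sum_def sum.reindex Complex.DeMoivre)
  finally show ?thesis ..
qed

lemma vertex_sum_square_approx:
  "cmod (vertex_sum \<theta> ^ 2 - 2 * cis (real s * \<theta>) * cnj (edge_sum \<theta>)) \<le> (real (card V))\<^sup>2 - 2 * real (card E)"
proof -
  define c where "c = (\<lambda>(u, v). cis (real (l (Inl u) + l (Inl v)) * \<theta>))"
  have arcs: "arcs E \<subseteq> V \<times> V" "finite (V \<times> V)"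
    using arcs_subset[OF simple] finite_vertices by auto
  have "vertex_sum \<theta> ^ 2 = (\<Sum>p\<in>V \<times> V. c p)"
    unfolding vertex_sum_def c_def power2_eq_square sum_product sum.cartesian_product
    by (rule sum.cong) (auto simp: cis_mult algebra_simps)
  also have "\<dots> = (\<Sum>p\<in>V \<times> V - arcs E. c p) + (\<Sum>p\<in>arcs E. c p)"
    using arcs by (rule sum.subset_diff)
  also have "(\<Sum>p\<in>arcs E. c p) = (\<Sum>(u, v)\<in>arcs E. cis (real s * \<theta>) * cnj (cis (real (l (Inr {u, v})) * \<theta>)))"
  proof (rule sum.cong[OF refl], clarify)
    fix u v assume "(u, v) \<in> arcs E"
    then have "l (Inl u) + l (Inl v) + l (Inr {u, v}) = s"
      using labelling unfolding edge_magic_labelling_def arcs_def by blast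
    then have "real (l (Inl u) + l (Inl v)) = real s - real (l (Inr {u, v}))"
      by (metis add_diff_cancel_right' of_nat_add)
    then have "real (l (Inl u) + l (Inl v)) * \<theta> = real s * \<theta> + - (real (l (Inr {u, v})) * \<theta>)"
      by (simp add: left_diff_distrib)
    then show "c (u, v) = cis (real s * \<theta>) * cnj (cis (real (l (Inr {u, v})) * \<theta>))"
      by (simp only: c_def case_prod_conv cis_cnj cis_mult)
  qed
  also have "\<dots> = 2 * cis (real s * \<theta>) * cnj (edge_sum \<theta>)"
    using sum_arcs[OF simple, of "\<lambda>e. cis (real s * \<theta>) * cnj (cis (real (l (Inr e)) * \<theta>))"]
    by (simp add: edge_sum_def sum_distrib_left mult.assoc)
  finally have "cmod (vertex_sum \<theta> ^ 2 - 2 * cis (real s * \<theta>) * cnj (edge_sum \<theta>))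
      = cmod (\<Sum>p\<in>V \<times> V - arcs E. c p)"
    by simp
  also have "\<dots> \<le> card (V \<times> V - arcs E)"
    using sum_norm_bound[of "V \<times> V - arcs E" c 1] by (simp add: c_def split: prod.splits)
  also have "\<dots> = (real (card V))\<^sup>2 - 2 * real (card E)"
    using arcs card_mono[OF arcs(2,1)]
    by (simp add: card_Diff_subset finite_subset card_arcs[OF simple] card_cartesian_product
        power2_eq_square of_nat_diff)
  finally show ?thesis .
qed

lemma vertex_sum_edge_sum_balance:
  "\<bar>(cmod (vertex_sum \<theta>))\<^sup>2 - 2 * cmod (edge_sum \<theta>)\<bar> \<le> (real (card V))\<^sup>2 - 2 * real (card E)"
proof -
  have "\<bar>cmod (vertex_sum \<theta> ^ 2) - cmod (2 * cis (real s * \<theta>) * cnj (edge_sum \<theta>))\<bar>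
      \<le> cmod (vertex_sum \<theta> ^ 2 - 2 * cis (real s * \<theta>) * cnj (edge_sum \<theta>))"
    by (rule norm_triangle_ineq3)
  then show ?thesis
    using vertex_sum_square_approx[of \<theta>] by (simp add: norm_mult norm_power)
qed

lemma card_edges_le:
  assumes "100 \<le> card V"
  shows "card E \<le> 4895/10000 * (real (card V))\<^sup>2"
proof -
  define N where "N = card E + card V"
  define a where "a = cmod (vertex_sum (pi / N))"
  define b where "b = cmod (vertex_sum (2 * pi / N))"
  have "2 \<le> N"
    using assms by (simp add: N_def)
  have "edge_sum (2 * pi / N) = - vertex_sum (2 * pi / N)"
    using vertex_sum_add_edge_sum[of "2 * pi / N"] sum_cis_power_full_turn[OF \<open>2 \<le> N\<close>]
    by (simp add: N_def eq_neg_iff_add_eq_0 add.commute)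
  then have full_turn: "b\<^sup>2 \<le> 2 * b + ((real (card V))\<^sup>2 - 2 * real (card E))"
    using abs_le_D1[OF vertex_sum_edge_sum_balance[of "2 * pi / N"]] by (simp add: b_def)
  have "cmod (\<Sum>k=1..N. cis (pi / N) ^ k) \<le> cmod (vertex_sum (pi / N)) + cmod (edge_sum (pi / N))"
    unfolding N_def vertex_sum_add_edge_sum[symmetric] by (rule norm_triangle_ineq)
  then have "2 * real N / pi - card V \<le> cmod (edge_sum (pi / N))"
    using norm_sum_cis_power_half_turn[of N] norm_vertex_sum_le[of "pi / N"] \<open>2 \<le> N\<close> by simp
  then have half_turn: "2 * (real (card E) + real (card V)) / pi - real (card V) \<le> cmod (edge_sum (pi / N))"
    by (simp add: N_def)
  have balance: "2 * cmod (edge_sum (pi / N)) - a\<^sup>2 \<le> (real (card V))\<^sup>2 - 2 * real (card E)"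
    using abs_le_D2[OF vertex_sum_edge_sum_balance[of "pi / N"]] unfolding a_def by linarith
  have "2 * a\<^sup>2 - (real (card V))\<^sup>2 \<le> card V * cmod (\<Sum>v\<in>V. cis (2 * (real (l (Inl v)) * (pi / N))))"
    unfolding a_def vertex_sum_def by (rule norm_sum_cis_double_angle)
  then have double_angle: "2 * a\<^sup>2 - (real (card V))\<^sup>2 \<le> card V * b"
    by (simp add: b_def vertex_sum_def mult.left_commute)
  show ?thesis
    using fourier_inequalities_bound[OF _ _ _ full_turn half_turn balance double_angle]
      assms by (simp add: b_def)
qed

end

lemma edge_magic_card_edges_le:
  assumes "edge_magic V E" "100 \<le> card V"
  shows "card E \<le> 4895/10000 * (real (card V))\<^sup>2"
proof -
  obtain l s where "simple_graph V E" "edge_magic_labelling V E l s"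
    using assms(1) unfolding edge_magic_def by blast
  then interpret edge_magic_labelled V E l s
    by unfold_locales
  show ?thesis
    using assms(2) by (rule card_edges_le)
qed

section \<open>A dense construction\<close>

lemma edge_magic_labelling_case_sum:
  assumes "bij_betw h V A" "bij_betw k E B" "A \<inter> B = {}" "A \<union> B = {1..card E + card V}"
    and "\<And>a b. {a, b} \<in> E \<Longrightarrow> h a + h b + k {a, b} = s"
  shows "edge_magic_labelling V E (case_sum h k) s"
proof -
  have "bij_betw (case_sum h k) (Inl ` V) A" "bij_betw (case_sum h k) (Inr ` E) B"
    using assms(1,2) by (auto simp: bij_betw_def inj_on_def image_image)
  then have "bij_betw (case_sum h k) (Inl ` V \<union> Inr ` E) (A \<union> B)"
    using assms(3) by (rule bij_betw_combine)
  then show ?thesis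
    using assms(4,5) by (simp add: edge_magic_labelling_def)
qed

lemma edge_magic_of_sum_cover:
  assumes "finite A" "A \<subseteq> {1..N}"
    and cover: "\<And>b. b \<in> {1..N} - A \<Longrightarrow> \<exists>x\<in>A. \<exists>y\<in>A. x \<noteq> y \<and> x + y + b = s"
  shows "\<exists>E. edge_magic {..<card A} E \<and> card E = N - card A"
proof -
  define V where "V = {..<card A}"
  define B where "B = {1..N} - A"
  obtain h where h: "bij_betw h V A"
    using ex_bij_betw_nat_finite[OF \<open>finite A\<close>] by (auto simp: V_def atLeast0LessThan)
  have "\<forall>b\<in>B. \<exists>p. fst p \<in> V \<and> snd p \<in> V \<and> fst p \<noteq> snd p \<and> h (fst p) + h (snd p) + b = s"
  proof
    fix b assume "b \<in> B"
    then obtain x y where "x \<in> A" "y \<in> A" "x \<noteq> y" "x + y + b = s"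
      using cover[of b] unfolding B_def by blast
    moreover have "x \<in> h ` V" "y \<in> h ` V"
      using h \<open>x \<in> A\<close> \<open>y \<in> A\<close> by (auto simp: bij_betw_def)
    ultimately show "\<exists>p. fst p \<in> V \<and> snd p \<in> V \<and> fst p \<noteq> snd p \<and> h (fst p) + h (snd p) + b = s"
      by (intro exI[of _ "(inv_into V h x, inv_into V h y)"])
        (metis f_inv_into_f inv_into_into fst_conv snd_conv)
  qed
  then obtain p where p: "\<And>b. b \<in> B \<Longrightarrow>
      fst (p b) \<in> V \<and> snd (p b) \<in> V \<and> fst (p b) \<noteq> snd (p b) \<and> h (fst (p b)) + h (snd (p b)) + b = s"
    by metis
  define edge_of where "edge_of b = {fst (p b), snd (p b)}" for b
  define E where "E = edge_of ` B"
  have edge_of_sum: "h u + h v + b = s" if "b \<in> B" "{u, v} = edge_of b" for u v b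
    using p[OF that(1)] that(2) by (auto simp: edge_of_def doubleton_eq_iff)
  have "inj_on edge_of B"
  proof (rule inj_onI)
    fix b c assume "b \<in> B" "c \<in> B" "edge_of b = edge_of c"
    then show "b = c"
      using edge_of_sum[of b "fst (p b)" "snd (p b)"] edge_of_sum[of c "fst (p b)" "snd (p b)"]
      by (simp add: edge_of_def)
  qed
  then have bij_edge_of: "bij_betw edge_of B E"
    by (simp add: E_def bij_betw_imageI)
  have "card A \<le> N"
    using card_mono[OF _ \<open>A \<subseteq> {1..N}\<close>] by simp
  have card_E: "card E = N - card A"
    using bij_betw_same_card[OF bij_edge_of] assms(1,2) by (simp add: B_def card_Diff_subset)
  have "simple_graph V E"
    using p by (fastforce simp: simple_graph_def E_def edge_of_def V_def)
  moreover have "edge_magic_labelling V E (case_sum h (the_inv_into B edge_of)) s"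
  proof (rule edge_magic_labelling_case_sum[OF h bij_betw_the_inv_into[OF bij_edge_of]])
    show "A \<inter> B = {}" "A \<union> B = {1..card E + card V}"
      using \<open>A \<subseteq> {1..N}\<close> \<open>card A \<le> N\<close> card_E by (auto simp: B_def V_def)
    fix u v assume "{u, v} \<in> E"
    then obtain b where "b \<in> B" "{u, v} = edge_of b"
      by (auto simp: E_def)
    then show "h u + h v + the_inv_into B edge_of {u, v} = s"
      using edge_of_sum the_inv_into_f_f[OF \<open>inj_on edge_of B\<close>] by simp
  qed
  ultimately show ?thesis
    using card_E by (auto simp: edge_magic_def V_def)
qed

lemma repr_mult_P_mult_Suc_P:
  fixes P w :: nat
  assumes "1 \<le> P" "P * P \<le> w + P" "w < 3 * (P * P) + P"
  shows "\<exists>i<2 * P. \<exists>j<2 * P. w = i * P + j * (P + 1)"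
proof -
  define q where "q = w div P"
  define r where "r = w mod P"
  have w: "w = q * P + r" and "r < P"
    using assms(1) by (simp_all add: q_def r_def)
  have "(P - 1) * P \<le> w"
    using assms(2) by (simp add: diff_mult_distrib)
  then have "P - 1 \<le> q"
    using assms(1) div_le_mono[of "(P - 1) * P" w P] by (simp add: q_def)
  have "w < (3 * P + 1) * P"
    using assms(3) by (simp add: algebra_simps)
  then have "q < 3 * P + 1"
    unfolding q_def by (rule less_mult_imp_div_less)
  show ?thesis
  proof (cases "q < 2 * P + r")
    case True
    moreover obtain i where "q = i + r"
      using \<open>r < P\<close> \<open>P - 1 \<le> q\<close> le_iff_add[of r q] by (auto simp: add.commute)
    ultimately have "w = i * P + r * (P + 1)" "i < 2 * P" "r < 2 * P"
      using w \<open>r < P\<close> by (auto simp: algebra_simps)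
    then show ?thesis by blast
  next
    case False
    then obtain i where "q = i + r + 1 + P"
      using assms(1) le_iff_add[of "r + 1 + P" q] by (auto simp: add.commute add.left_commute)
    then have "w = i * P + (r + P) * (P + 1)" "i < 2 * P" "r + P < 2 * P"
      using w \<open>r < P\<close> \<open>q < 3 * P + 1\<close> by (auto simp: algebra_simps)
    then show ?thesis by blast
  qed
qed

lemma repr_block_mult_P:
  fixes P w :: nat
  assumes "1 \<le> P" "w < 3 * (2 * (P * P) + 1)"
  shows "\<exists>k<3. \<exists>c\<le>P. \<exists>i<2 * P. w = k * (2 * (P * P) + 1) + c + i * P"
proof -
  define L where "L = 2 * (P * P) + 1"
  define k where "k = w div L"
  define r where "r = w mod L"
  have w: "w = k * L + r"
    unfolding k_def r_def by (rule div_mult_mod_eq[symmetric])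
  have "k < 3"
    unfolding k_def using assms(2) by (simp add: L_def less_mult_imp_div_less)
  have "r < L"
    unfolding r_def by (simp add: L_def)
  show ?thesis
  proof (cases "r = 2 * (P * P)")
    case True
    have "(2 * P - 1) * P + P = 2 * (P * P)"
      using assms(1) by (simp add: algebra_simps diff_mult_distrib)
    then have "w = k * L + P + (2 * P - 1) * P"
      using w True by simp
    moreover have "2 * P - 1 < 2 * P"
      using assms(1) by simp
    ultimately show ?thesis
      using \<open>k < 3\<close> unfolding L_def by blast
  next
    case False
    then have "r < 2 * P * P"
      using \<open>r < L\<close> by (simp add: L_def)
    then have "r div P < 2 * P"
      by (rule less_mult_imp_div_less)
    moreover have "r mod P \<le> P"
      using assms(1) by (simp add: less_imp_le)
    moreover have "w = k * L + r mod P + r div P * P"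
      by (simp only: w add.assoc mod_div_mult_eq)
    ultimately show ?thesis
      using \<open>k < 3\<close> unfolding L_def by blast
  qed
qed

lemma repr_block_mult_Suc_P:
  fixes P w :: nat
  assumes "1 \<le> P" "w < 6 * (P * P) + 2 * P + 2"
  shows "\<exists>k<3. \<exists>c\<le>P. \<exists>j<2 * P. w = k * (2 * (P * P) + 1) + c + j * (P + 1)"
proof -
  define L where "L = 2 * (P * P) + 1"
  obtain k r where w: "w = k * L + r" and "k < 3" "r < 2 * P * (P + 1)"
  proof (cases "w < 2 * L")
    case True
    have "w mod L < L"
      by (simp add: L_def)
    also have "L \<le> 2 * P * (P + 1)"
      using assms(1) by (simp add: L_def algebra_simps)
    finally have "w mod L < 2 * P * (P + 1)" .
    moreover have "w div L < 3"
      using True less_mult_imp_div_less[of w 2 L] by simp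
    ultimately show ?thesis
      using div_mult_mod_eq[of w L] that[of "w div L" "w mod L"] by simp
  next
    case False
    then show ?thesis
      using assms(2) that[of 2 "w - 2 * L"] by (simp add: L_def algebra_simps)
  qed
  have "r div (P + 1) < 2 * P"
    using \<open>r < 2 * P * (P + 1)\<close> by (rule less_mult_imp_div_less)
  moreover have "r mod (P + 1) \<le> P"
    by (simp add: less_Suc_eq_le)
  moreover have "w = k * L + r mod (P + 1) + r div (P + 1) * (P + 1)"
    by (simp only: w add.assoc mod_div_mult_eq)
  ultimately show ?thesis
    using \<open>k < 3\<close> unfolding L_def by blast
qed

(* With d = 6P^2 + 3 and a = 9P^2 + P + 3, the cross sums of the three blocks cover
   [d + P^2 - P, a), [a, a + d) and [a + d, a + d + 6P^2 + 2P + 2) respectively. *)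
definition magic_offsets :: "nat \<Rightarrow> nat set" where
  "magic_offsets P =
     (\<lambda>i. i * P) ` {..<2 * P} \<union>
     (\<lambda>j. 6 * (P * P) + 3 + j * (P + 1)) ` {..<2 * P} \<union>
     (\<lambda>(k, c). 9 * (P * P) + P + 3 + k * (2 * (P * P) + 1) + c) ` ({..<3} \<times> {..P})"

lemma card_magic_offsets_le: "card (magic_offsets P) \<le> 7 * P + 3"
proof -
  have "card (magic_offsets P) \<le> card {..<2 * P} + card {..<2 * P} + card ({..<3::nat} \<times> {..P})"
    unfolding magic_offsets_def
    by (intro card_Un_le[THEN order_trans] add_mono card_image_le) auto
  then show ?thesis
    by (simp add: card_cartesian_product)
qed

lemma mult_add_le_double_mult: "i < 2 * P \<Longrightarrow> i * Q + Q \<le> 2 * (P * (Q::nat))"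
  using mult_le_mono1[of "Suc i" "2 * P" Q] by simp

lemma magic_offsets_le:
  assumes "x \<in> magic_offsets P"
  shows "x \<le> 13 * (P * P) + 2 * P + 5"
  using assms unfolding magic_offsets_def
proof (elim UnE imageE; clarify)
  fix i assume "i < 2 * P"
  then show "i * P \<le> 13 * (P * P) + 2 * P + 5"
    using mult_add_le_double_mult[of i P P] by simp
next
  fix j assume "j < 2 * P"
  then show "6 * (P * P) + 3 + j * (P + 1) \<le> 13 * (P * P) + 2 * P + 5"
    using mult_add_le_double_mult[of j P "P + 1"] by (simp add: algebra_simps)
next
  fix k c :: nat assume "k < 3" "c \<le> P"
  then have "k * (2 * (P * P) + 1) \<le> 2 * (2 * (P * P) + 1)"
    by (intro mult_le_mono1) simp
  then show "9 * (P * P) + P + 3 + k * (2 * (P * P) + 1) + c \<le> 13 * (P * P) + 2 * P + 5"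
    using \<open>c \<le> P\<close> by simp
qed

lemma magic_offsets_sumset:
  assumes "1 \<le> P" "7 * (P * P) + 3 \<le> z + P" "z \<le> 21 * (P * P) + 3 * P + 7"
  shows "\<exists>x\<in>magic_offsets P. \<exists>y\<in>magic_offsets P. x < y \<and> x + y = z"
proof -
  define d where "d = 6 * (P * P) + 3"
  define a where "a = 9 * (P * P) + P + 3"
  have "P \<le> P * P"
    using assms(1) by simp
  have low: "i * P \<in> magic_offsets P" "i * P < d" if "i < 2 * P" for i
    using that mult_add_le_double_mult[of i P P] by (auto simp: magic_offsets_def d_def)
  have mid: "d + j * (P + 1) \<in> magic_offsets P" "d + j * (P + 1) < a" if "j < 2 * P" for j
    using that mult_add_le_double_mult[of j P "P + 1"] \<open>P \<le> P * P\<close>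
    by (auto simp: magic_offsets_def d_def a_def algebra_simps)
  have high: "a + k * (2 * (P * P) + 1) + c \<in> magic_offsets P" if "k < 3" "c \<le> P" for k c
    unfolding magic_offsets_def a_def using that by (intro UnI2 image_eqI[of _ _ "(k, c)"]) auto
  consider "z < a" | "a \<le> z" "z < a + d" | "a + d \<le> z"
    by linarith
  then show ?thesis
  proof cases
    case 1
    have "d \<le> z"
      using assms(2) \<open>P \<le> P * P\<close> unfolding d_def by arith
    then have "P * P \<le> z - d + P" "z - d < 3 * (P * P) + P"
      using 1 assms(2) unfolding d_def a_def by arith+
    then obtain i j where ij: "i < 2 * P" "j < 2 * P" and "z - d = i * P + j * (P + 1)"
      using repr_mult_P_mult_Suc_P[OF assms(1)] by blast
    then have "i * P < d + j * (P + 1)" "i * P + (d + j * (P + 1)) = z"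
      using low(2)[OF ij(1)] \<open>d \<le> z\<close> by auto
    then show ?thesis
      using low(1)[OF ij(1)] mid(1)[OF ij(2)] by blast
  next
    case 2
    then have "z - a < 3 * (2 * (P * P) + 1)"
      unfolding d_def by arith
    then obtain k c i where kci: "k < 3" "c \<le> P" "i < 2 * P"
      and "z - a = k * (2 * (P * P) + 1) + c + i * P"
      using repr_block_mult_P[OF assms(1)] by blast
    moreover have "d \<le> a"
      by (simp add: d_def a_def)
    ultimately have "i * P < a + k * (2 * (P * P) + 1) + c" "i * P + (a + k * (2 * (P * P) + 1) + c) = z"
      using low(2)[OF kci(3)] 2 by auto
    then show ?thesis
      using low(1)[OF kci(3)] high[OF kci(1,2)] by blast
  next
    case 3
    then have "z - a - d < 6 * (P * P) + 2 * P + 2"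
      using assms(3) unfolding d_def a_def by arith
    then obtain k c j where kcj: "k < 3" "c \<le> P" "j < 2 * P"
      and "z - a - d = k * (2 * (P * P) + 1) + c + j * (P + 1)"
      using repr_block_mult_Suc_P[OF assms(1)] by blast
    then have "d + j * (P + 1) < a + k * (2 * (P * P) + 1) + c"
        "d + j * (P + 1) + (a + k * (2 * (P * P) + 1) + c) = z"
      using mid(2)[OF kcj(3)] 3 by auto
    then show ?thesis
      using mid(1)[OF kcj(3)] high[OF kcj(1,2)] by blast
  qed
qed

lemma edge_magic_many_edges:
  assumes "1 \<le> P" "7 * P + 3 \<le> n"
  shows "\<exists>E. edge_magic {..<n} E \<and> 14 * (P * P) + 2 \<le> card E + 3 * P"
proof -
  define T where "T = magic_offsets P"
  define M where "M = 14 * (P * P) + 4 * P + 5"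
  (* the labels above M only pad the vertex set to n elements and need no covering *)
  define A where "A = Suc ` T \<union> {M<..M + (n - card T)}"
  have "card T \<le> 7 * P + 3"
    unfolding T_def by (rule card_magic_offsets_le)
  have "finite T"
    by (simp add: T_def magic_offsets_def)
  have T_le: "Suc x \<le> M" if "x \<in> T" for x
    using magic_offsets_le[of x P] that assms(1) by (simp add: T_def M_def)
  have "Suc ` T \<inter> {M<..M + (n - card T)} = {}"
    using T_le by force
  then have "card A = n"
    unfolding A_def using \<open>finite T\<close> \<open>card T \<le> 7 * P + 3\<close> assms(2)
    by (simp add: card_Un_disjoint card_image)
  have "finite A"
    by (simp add: A_def \<open>finite T\<close>)
  have A_sub: "A \<subseteq> {1..M + (n - card T)}"
    using T_le by (force simp: A_def intro: trans_le_add1)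
  have cover: "\<exists>x\<in>A. \<exists>y\<in>A. x \<noteq> y \<and> x + y + b = 21 * (P * P) + 3 * P + 10"
    if "b \<in> {1..M + (n - card T)} - A" for b
  proof -
    have "1 \<le> b" "b \<le> M"
      using that by (auto simp: A_def)
    then have "7 * (P * P) + 3 \<le> 21 * (P * P) + 3 * P + 8 - b + P"
        "21 * (P * P) + 3 * P + 8 - b \<le> 21 * (P * P) + 3 * P + 7"
      unfolding M_def by arith+
    then obtain x y where "x \<in> T" "y \<in> T" "x < y" "x + y = 21 * (P * P) + 3 * P + 8 - b"
      using magic_offsets_sumset[OF assms(1)] unfolding T_def by blast
    then show ?thesis
      using \<open>b \<le> M\<close> unfolding A_def M_def by (intro bexI[of _ "Suc x"] bexI[of _ "Suc y"]) auto
  qed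
  obtain E where "edge_magic {..<n} E" "card E = M + (n - card T) - n"
    using edge_magic_of_sum_cover[OF \<open>finite A\<close> A_sub cover] \<open>card A = n\<close> by auto
  moreover have "M + (n - card T) - n = M - card T"
    using \<open>card T \<le> 7 * P + 3\<close> assms(2) by simp
  ultimately show ?thesis
    using \<open>card T \<le> 7 * P + 3\<close> by (intro exI[of _ E]) (auto simp: M_def)
qed

lemma edge_magic_quadratic_many_edges:
  assumes "10 \<le> n"
  shows "\<exists>E. edge_magic {..<n} E \<and> 2/7 * (real n)\<^sup>2 - 10 * real n \<le> card E"
proof -
  define P where "P = (n - 3) div 7"
  have "1 \<le> P" "7 * P + 3 \<le> n" "n \<le> 7 * P + 9"
    using assms unfolding P_def by linarith+
  then obtain E where E: "edge_magic {..<n} E" "14 * (P * P) + 2 \<le> card E + 3 * P"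
    using edge_magic_many_edges by blast
  then have "14 * (real P)\<^sup>2 - 3 * P + 2 \<le> card E"
    by (simp add: power2_eq_square flip: of_nat_mult of_nat_add of_nat_le_iff)
  moreover have "(real n)\<^sup>2 \<le> (7 * real P + 9)\<^sup>2"
    using \<open>n \<le> 7 * P + 9\<close> by (intro power_mono) auto
  moreover have "(7 * real P + 9)\<^sup>2 = 49 * (real P)\<^sup>2 + 126 * P + 81"
    by (simp add: power2_eq_square algebra_simps)
  ultimately have "2/7 * (real n)\<^sup>2 - 10 * real n \<le> card E"
    using \<open>7 * P + 3 \<le> n\<close> by linarith
  with E(1) show ?thesis by blast
qed

lemma finite_edge_magic_sizes: "finite {card E | E. edge_magic {..<n::nat} E}"
proof -
  have "{card E | E. edge_magic {..<n} E} \<subseteq> card ` Pow (Pow {..<n})"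
    by (auto simp: edge_magic_def simple_graph_def)
  then show ?thesis
    by (rule finite_subset) (simp add: finite_Pow_iff)
qed

lemma card_le_max_edge_magic: "edge_magic {..<n} E \<Longrightarrow> card E \<le> max_edge_magic n"
  unfolding max_edge_magic_def by (rule Max_ge[OF finite_edge_magic_sizes]) blast

lemma max_edge_magic_attained:
  assumes "edge_magic {..<n} E"
  obtains E' where "edge_magic {..<n} E'" "max_edge_magic n = card E'"
proof -
  have "max_edge_magic n \<in> {card E | E. edge_magic {..<n} E}"
    unfolding max_edge_magic_def using assms by (intro Max_in[OF finite_edge_magic_sizes]) blast
  then show ?thesis
    using that by blast
qed

lemma edge_magic_density_constant_ge: "4895/10000 \<le> 1/2 - 2 / (2 + (1 + 2 * sqrt 2) * pi) ^ 2"
proof -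
  have "141/100 \<le> sqrt 2"
    by (rule real_le_rsqrt) (simp add: power2_eq_square)
  then have "382/100 * (314/100) \<le> (1 + 2 * sqrt 2) * pi"
    using pi_approx(1) by (intro mult_mono) auto
  then have "(139/10)\<^sup>2 \<le> (2 + (1 + 2 * sqrt 2) * pi) ^ 2"
    by (intro power_mono) auto
  then have "2 / (2 + (1 + 2 * sqrt 2) * pi) ^ 2 \<le> 2 / (139/10)\<^sup>2"
    by (intro divide_left_mono) auto
  then show ?thesis
    by (simp add: power2_eq_square)
qed

lemma max_edge_magic_ge:
  assumes "10 \<le> n"
  shows "2/7 * (real n)\<^sup>2 - 10 * real n \<le> max_edge_magic n"
proof -
  obtain E where "edge_magic {..<n} E" "2/7 * (real n)\<^sup>2 - 10 * real n \<le> card E"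
    using edge_magic_quadratic_many_edges[OF assms] by blast
  then show ?thesis
    using card_le_max_edge_magic[of n E] by linarith
qed

lemma max_edge_magic_le:
  assumes "100 \<le> n"
  shows "max_edge_magic n \<le> 4895/10000 * (real n)\<^sup>2"
proof -
  obtain E0 where "edge_magic {..<n} E0"
    using edge_magic_quadratic_many_edges[of n] assms by auto
  then obtain E where "edge_magic {..<n} E" "max_edge_magic n = card E"
    by (rule max_edge_magic_attained)
  then show ?thesis
    using edge_magic_card_edges_le[of "{..<n}" E] assms by simp
qed

theorem theorem1:
  shows "(\<exists>C::real. \<forall>\<^sub>F n in sequentially.
            real (max_edge_magic n) \<ge> 2/7 * real n ^ 2 - C * real n)
       \<and> (\<forall>\<epsilon>>0. \<forall>\<^sub>F n in sequentially.
            real (max_edge_magic n)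
              \<le> (1/2 - 2 / (2 + (1 + 2 * sqrt 2) * pi) ^ 2 + \<epsilon>) * real n ^ 2)"
proof (intro conjI exI[of _ 10] allI impI)
  show "\<forall>\<^sub>F n in sequentially. real (max_edge_magic n) \<ge> 2/7 * real n ^ 2 - 10 * real n"
    using max_edge_magic_ge by (intro eventually_sequentiallyI) auto
next
  fix \<epsilon> :: real assume "0 < \<epsilon>"
  have "4895/10000 * real n ^ 2 \<le> (1/2 - 2 / (2 + (1 + 2 * sqrt 2) * pi) ^ 2 + \<epsilon>) * real n ^ 2" for n
    using edge_magic_density_constant_ge \<open>0 < \<epsilon>\<close> by (intro mult_right_mono) auto
  then show "\<forall>\<^sub>F n in sequentially.
      real (max_edge_magic n) \<le> (1/2 - 2 / (2 + (1 + 2 * sqrt 2) * pi) ^ 2 + \<epsilon>) * real n ^ 2"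
    using max_edge_magic_le by (intro eventually_sequentiallyI[of 100]) (meson order_trans)
qed

end
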